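(* Suppose a social choice function $f$ is rationalizably implemented by a mechanism $\mathcal{M}$. Then for all $\theta,\theta'\in\Theta$: if $S_i^{\mathcal{M},\theta}\subseteq S_i^{\mathcal{M},\theta'}$ for every $i\in\mathcal{I}$, then $S_i^{\mathcal{M},\theta}=S_i^{\mathcal{M},\theta'}$ for every $i\in\mathcal{I}$.
   Context: Setting: $\mathcal{I}$ is a finite set of agents with $|\mathcal{I}|\ge3$; $\Theta$ is a finite set of states; $Z$ is a countable set of pure outcomes; $Y=\Delta(Z)$ is the set of lotteries on $Z$, each $z\in Z$ identified with the degenerate lottery. Each agent $i$ has at each state $\theta$ a utility $u_i(\cdot,\theta):Z\to\mathbb{R}$, extended to $Y$ by expected utility. An SCF is a map $f:\Theta\to Z$ (assumed with $|f(\Theta)|\ge2$). A mechanism is $\mathcal{M}=\langle M=\times_iM_i,\ g:M\to Y\rangle$ with each $M_i$ countable. For state $\theta$ and profile $S=(S_i)_i$, $S_i\subseteq M_i$, $b_i^{\mathcal{M},\theta}(S)$ is the set of $m_i\in M_i$ for which there is a probability distribution $\lambda_{-i}$ on $M_{-i}$ supported in $S_{-i}=\times_{j\ne i}S_j$ with $m_i\in\arg\max_{m_i'\in M_i}\sum_{m_{-i}}\lambda_{-i}(m_{-i})u_i(g(m_i',m_{-i}),\theta)$. $S^{\mathcal{M},\theta}=(S_i^{\mathcal{M},\theta})_i$ is the largest fixed point of the monotone operator $b^{\mathcal{M},\theta}=(b_i^{\mathcal{M},\theta})_i$ with respect to componentwise inclusion, identified with the product $\times_iS_i^{\mathcal{M},\theta}$.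 $f$ is rationalizably implemented by $\mathcal{M}$ if $g(S^{\mathcal{M},\theta})=\{f(\theta)\}$ for every $\theta\in\Theta$. *)

theory Defs
  imports "HOL-Probability.Probability"
begin

text \<open>Pure outcomes: a countable type 'z;
  lotteries are 'z pmf (a pure outcome z is identified with return_pmf z).\<close>

definition EU :: "('i \<Rightarrow> 'z \<Rightarrow> 's \<Rightarrow> real) \<Rightarrow> 's \<Rightarrow> 'i \<Rightarrow> 'z pmf \<Rightarrow> real" where
  "EU u \<theta> i y = measure_pmf.expectation y (\<lambda>z. u i z \<theta>)"

text \<open>Expected utility of agent i sending x against the belief lam over the other agents'
  messages (lam is a distribution on profiles; its i-th component is ignored).\<close>
definition exp_payoff ::
  "(('i \<Rightarrow> 'm) \<Rightarrow> 'z pmf) \<Rightarrow> ('i \<Rightarrow> 'z \<Rightarrow> 's \<Rightarrow> real) \<Rightarrow> 's \<Rightarrow> 'i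
     \<Rightarrow> ('i \<Rightarrow> 'm) pmf \<Rightarrow> 'm \<Rightarrow> real" where
  "exp_payoff g u \<theta> i lam x = measure_pmf.expectation lam (\<lambda>m. EU u \<theta> i (g (m(i := x))))"

definition best_resp ::
  "('i \<Rightarrow> 'm set) \<Rightarrow> (('i \<Rightarrow> 'm) \<Rightarrow> 'z pmf) \<Rightarrow> ('i \<Rightarrow> 'z \<Rightarrow> 's \<Rightarrow> real) \<Rightarrow> 's
     \<Rightarrow> ('i \<Rightarrow> 'm set) \<Rightarrow> 'i \<Rightarrow> 'm set" where
  "best_resp M g u \<theta> S i =
     {x \<in> M i. \<exists>lam :: ('i \<Rightarrow> 'm) pmf.
        set_pmf lam \<subseteq> {m. \<forall>j. j \<noteq> i \<longrightarrow> m j \<in> S j} \<and>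
        (\<forall>x' \<in> M i. exp_payoff g u \<theta> i lam x' \<le> exp_payoff g u \<theta> i lam x)}"

definition br_op ::
  "('i \<Rightarrow> 'm set) \<Rightarrow> (('i \<Rightarrow> 'm) \<Rightarrow> 'z pmf) \<Rightarrow> ('i \<Rightarrow> 'z \<Rightarrow> 's \<Rightarrow> real) \<Rightarrow> 's
     \<Rightarrow> ('i \<Rightarrow> 'm set) \<Rightarrow> ('i \<Rightarrow> 'm set)" where
  "br_op M g u \<theta> S = (\<lambda>i. best_resp M g u \<theta> S i)"

definition rat_set ::
  "('i \<Rightarrow> 'm set) \<Rightarrow> (('i \<Rightarrow> 'm) \<Rightarrow> 'z pmf) \<Rightarrow> ('i \<Rightarrow> 'z \<Rightarrow> 's \<Rightarrow> real) \<Rightarrow> 's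
     \<Rightarrow> ('i \<Rightarrow> 'm set)" where
  "rat_set M g u \<theta> = gfp (br_op M g u \<theta>)"

definition rat_implements ::
  "('i \<Rightarrow> 'm set) \<Rightarrow> (('i \<Rightarrow> 'm) \<Rightarrow> 'z pmf) \<Rightarrow> ('i \<Rightarrow> 'z \<Rightarrow> 's \<Rightarrow> real) \<Rightarrow> ('s \<Rightarrow> 'z) \<Rightarrow> bool" where
  "rat_implements M g u f \<longleftrightarrow>
     (\<forall>\<theta>. g ` {m. \<forall>i. m i \<in> rat_set M g u \<theta> i} = {return_pmf (f \<theta>)})"

end

theory Submission
  imports Defs
begin

text \<open>If \<open>\<theta>\<close>'s rationalizable profiles are all \<open>\<theta>'\<close>-rationalizable, implementation forces
  the two states to have the same outcome, so \<open>g\<close> is constant on the larger product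
  \<open>S\<^sup>\<theta>'\<close>. Against beliefs concentrated there every message of \<open>S\<^sup>\<theta>'\<close> earns the same
  expected payoff, so each of them is a best reply at \<open>\<theta>\<close> to the very belief that
  justifies some message of \<open>S\<^sup>\<theta>\<close>. Hence \<open>S\<^sup>\<theta>'\<close> is self-justifying at \<open>\<theta>\<close>, and
  maximality of the greatest fixed point gives \<open>S\<^sup>\<theta>' \<subseteq> S\<^sup>\<theta>\<close>.\<close>

lemma mono_br_op: "mono (br_op M g u \<theta>)"
  unfolding mono_def br_op_def best_resp_def le_fun_def
  by blast

lemma rat_set_le_br_op: "rat_set M g u \<theta> \<le> br_op M g u \<theta> (rat_set M g u \<theta>)"
  unfolding rat_set_def using gfp_unfold[OF mono_br_op] by (metis order_refl)

lemma le_rat_set_coinduct: "S \<le> br_op M g u \<theta> S \<Longrightarrow> S \<le> rat_set M g u \<theta>"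
  unfolding rat_set_def by (rule gfp_upperbound)

lemma best_resp_subset_messages: "best_resp M g u \<theta> S i \<subseteq> M i"
  unfolding best_resp_def by blast

lemma rat_set_subset_messages: "rat_set M g u \<theta> i \<subseteq> M i"
proof -
  have "rat_set M g u \<theta> i \<subseteq> br_op M g u \<theta> (rat_set M g u \<theta>) i"
    by (rule le_funD[OF rat_set_le_br_op])
  also have "\<dots> \<subseteq> M i"
    unfolding br_op_def by (rule best_resp_subset_messages)
  finally show ?thesis .
qed

lemma exp_payoff_cong:
  assumes "\<And>m. m \<in> set_pmf lam \<Longrightarrow> g (m(i := x)) = g (m(i := y))"
  shows "exp_payoff g u \<theta> i lam x = exp_payoff g u \<theta> i lam y"
  unfolding exp_payoff_def
  by (rule integral_cong_AE) (auto intro!: AE_pmfI simp: assms)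

lemma best_resp_of_constant_outcome:
  assumes const: "\<And>m. \<forall>j. m j \<in> T j \<Longrightarrow> g m = y"
    and "S \<le> T"
    and a: "a \<in> best_resp M g u \<theta> S i" "a \<in> T i"
    and x: "x \<in> T i" "x \<in> M i"
  shows "x \<in> best_resp M g u \<theta> T i"
proof -
  obtain lam where lam: "set_pmf lam \<subseteq> {m. \<forall>j. j \<noteq> i \<longrightarrow> m j \<in> S j}"
    and best: "\<forall>x' \<in> M i. exp_payoff g u \<theta> i lam x' \<le> exp_payoff g u \<theta> i lam a"
    using a(1) unfolding best_resp_def by blast
  have lam_T: "set_pmf lam \<subseteq> {m. \<forall>j. j \<noteq> i \<longrightarrow> m j \<in> T j}"
    using lam \<open>S \<le> T\<close> unfolding le_fun_def by blast
  have "exp_payoff g u \<theta> i lam x = exp_payoff g u \<theta> i lam a"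
  proof (rule exp_payoff_cong)
    fix m assume "m \<in> set_pmf lam"
    with lam_T have others: "\<forall>j. j \<noteq> i \<longrightarrow> m j \<in> T j" by blast
    have "g (m(i := x)) = y" by (rule const) (use others x(1) in auto)
    moreover have "g (m(i := a)) = y" by (rule const) (use others a(2) in auto)
    ultimately show "g (m(i := x)) = g (m(i := a))" by simp
  qed
  then show ?thesis
    unfolding best_resp_def using x(2) lam_T best
    by (intro CollectI conjI exI[of _ lam]) auto
qed

lemma le_br_op_of_constant_outcome:
  assumes const: "\<And>m. \<forall>j. m j \<in> T j \<Longrightarrow> g m = y"
    and "S \<le> T" and "S \<le> br_op M g u \<theta> S"
    and m0: "\<forall>i. m0 i \<in> S i"
    and T_msgs: "\<And>i. T i \<subseteq> M i"
  shows "T \<le> br_op M g u \<theta> T"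
proof (rule le_funI, unfold br_op_def, rule subsetI)
  fix i x assume x: "x \<in> T i"
  have a: "m0 i \<in> best_resp M g u \<theta> S i"
    using le_funD[OF \<open>S \<le> br_op M g u \<theta> S\<close>, of i] m0 unfolding br_op_def by blast
  have "m0 i \<in> T i" using le_funD[OF \<open>S \<le> T\<close>, of i] m0 by blast
  moreover have "x \<in> M i" using x T_msgs by blast
  ultimately show "x \<in> best_resp M g u \<theta> T i"
    using best_resp_of_constant_outcome[where T = T and g = g and y = y, OF const \<open>S \<le> T\<close> a] x
    by blast
qed

lemma rat_implements_outcome:
  assumes "rat_implements M g u f" and "\<forall>i. m i \<in> rat_set M g u \<theta> i"
  shows "g m = return_pmf (f \<theta>)"
proof -
  have "g m \<in> g ` {m. \<forall>i. m i \<in> rat_set M g u \<theta> i}" using assms(2) by blast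
  then show ?thesis using assms(1) by (simp add: rat_implements_def)
qed

lemma rat_implements_ex_profile:
  assumes "rat_implements M g u f"
  obtains m where "\<forall>i. m i \<in> rat_set M g u \<theta> i"
proof -
  have "g ` {m. \<forall>i. m i \<in> rat_set M g u \<theta> i} \<noteq> {}"
    using assms by (simp add: rat_implements_def)
  then show ?thesis using that by blast
qed

theorem lemma1:
  fixes M :: "'i::finite \<Rightarrow> 'm::countable set"
    and g :: "('i \<Rightarrow> 'm) \<Rightarrow> 'z::countable pmf"
    and u :: "'i \<Rightarrow> 'z \<Rightarrow> 's::finite \<Rightarrow> real"
    and f :: "'s \<Rightarrow> 'z"
  assumes "CARD('i) \<ge> 3"
    and "card (range f) \<ge> 2"
    and impl: "rat_implements M g u f"
    and sub: "\<forall>i. rat_set M g u \<theta> i \<subseteq> rat_set M g u \<theta>' i"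
  shows "\<forall>i. rat_set M g u \<theta> i = rat_set M g u \<theta>' i"
proof -
  define S where "S = rat_set M g u \<theta>"
  define T where "T = rat_set M g u \<theta>'"
  have "S \<le> T" using sub unfolding S_def T_def le_fun_def by blast
  obtain m0 where m0: "\<forall>i. m0 i \<in> S i"
    using rat_implements_ex_profile[OF impl] unfolding S_def by blast
  have "\<forall>i. m0 i \<in> T i" using m0 \<open>S \<le> T\<close> unfolding le_fun_def by blast
  then have "g m0 = return_pmf (f \<theta>')"
    unfolding T_def by (rule rat_implements_outcome[OF impl])
  moreover have "g m0 = return_pmf (f \<theta>)"
    using m0 unfolding S_def by (rule rat_implements_outcome[OF impl])
  ultimately have const: "g m = return_pmf (f \<theta>)" if "\<forall>j. m j \<in> T j" for m
    using rat_implements_outcome[OF impl, of m \<theta>'] that unfolding T_def by simp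
  have T_msgs: "T i \<subseteq> M i" for i
    unfolding T_def by (rule rat_set_subset_messages)
  have "S \<le> br_op M g u \<theta> S"
    unfolding S_def by (rule rat_set_le_br_op)
  with const \<open>S \<le> T\<close> have "T \<le> br_op M g u \<theta> T"
    using m0 T_msgs by (rule le_br_op_of_constant_outcome)
  then have "T \<le> S" unfolding S_def by (rule le_rat_set_coinduct)
  with \<open>S \<le> T\<close> have "S = T" by (rule order_antisym)
  then show ?thesis unfolding S_def T_def by simp
qed

end
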